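(* Let $g$ be a balanced $l$-variable Boolean function such that there exists $\bm{\beta}\in\mathbb{F}_2^l$ with $\mathrm{wt}(\bm{\beta})=1$ and $W_g^2(\bm{\beta})=\max_{\mathbf{v}\in\mathbb{F}_2^l}W_g^2(\mathbf{v})$. Define $f_0=g$ and $f_m=g\diamond f_{m-1}$ for $m\ge1$ (so $f_m$ is an $l^{m+1}$-variable Boolean function). Then for all $m\ge0$, $$H_\infty(f_m)=(m+1)\,H_\infty(g)\quad\text{and}\quad \frac{H_\infty(f_m)}{\mathrm{Inf}(f_m)}=\frac{H_\infty(g)}{\mathrm{Inf}(g)}\cdot\frac{m+1}{\mathrm{Inf}(g)^m}.$$
   Context: Boolean functions are maps $\mathbb{F}_2^n\to\mathbb{F}_2$; balanced means taking value $1$ on exactly half the inputs. Walsh transform: $W_f(\bm{\alpha})=2^{-n}\sum_{\mathbf{x}}(-1)^{f(\mathbf{x})\oplus\langle\mathbf{x},\bm{\alpha}\rangle}$. Logarithms are base 2. Min-entropy: $H_\infty(f)=\min_{\bm{\alpha}:W_f^2(\bm{\alpha})\ne0}\log(1/W_f^2(\bm{\alpha}))$. Influence: $\mathrm{Inf}(f)=\sum_{i=1}^n\Pr_{\mathbf{x}\in\mathbb{F}_2^n}[f(\mathbf{x})\ne f(\mathbf{x}\oplus\mathbf{e}_i)]$, where $\mathbf{e}_i$ is the $i$-th unit vector (equivalently $\mathrm{Inf}(f)=\sum_{\bm{\alpha}}\mathrm{wt}(\bm{\alpha})W_f^2(\bm{\alpha})$). Disjoint composition: for $f$ on $k$ variables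 and $h$ on $l$ variables, $(f\diamond h)(\mathbf{x})=f(h(\mathbf{x}^{(1)}),\ldots,h(\mathbf{x}^{(k)}))$ with $\mathbf{x}^{(i)}=(x_{(i-1)l+1},\ldots,x_{il})$. *)

theory Defs
  imports Complex_Main
begin

text \<open>Vectors of F_2^n are boolean lists of length n; a Boolean function on n variables
  is a map bool list => bool, only its values on the cube matter.\<close>

definition cube :: "nat \<Rightarrow> bool list set" where
  "cube n = {xs. length xs = n}"

definition ip :: "bool list \<Rightarrow> bool list \<Rightarrow> bool" where
  "ip x a = odd (length (filter id (map2 (\<and>) x a)))"

definition wt :: "bool list \<Rightarrow> nat" where
  "wt a = length (filter id a)"

definition balanced :: "nat \<Rightarrow> (bool list \<Rightarrow> bool) \<Rightarrow> bool" where
  "balanced n f \<longleftrightarrow> 2 * card {x \<in> cube n. f x} = 2 ^ n"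

definition walsh :: "nat \<Rightarrow> (bool list \<Rightarrow> bool) \<Rightarrow> bool list \<Rightarrow> real" where
  "walsh n f a = (\<Sum>x\<in>cube n. (if f x \<noteq> ip x a then -1 else 1)) / 2 ^ n"

definition min_entropy :: "nat \<Rightarrow> (bool list \<Rightarrow> bool) \<Rightarrow> real" where
  "min_entropy n f = Min {log 2 (1 / (walsh n f a)\<^sup>2) | a. a \<in> cube n \<and> (walsh n f a)\<^sup>2 \<noteq> 0}"

definition flip :: "bool list \<Rightarrow> nat \<Rightarrow> bool list" where
  "flip x i = x[i := \<not> x ! i]"

definition influence :: "nat \<Rightarrow> (bool list \<Rightarrow> bool) \<Rightarrow> real" where
  "influence n f = (\<Sum>i<n. real (card {x \<in> cube n. f x \<noteq> f (flip x i)}) / 2 ^ n)"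

definition dcomp :: "nat \<Rightarrow> nat \<Rightarrow> (bool list \<Rightarrow> bool) \<Rightarrow> (bool list \<Rightarrow> bool) \<Rightarrow> bool list \<Rightarrow> bool" where
  "dcomp k l f h x = f (map (\<lambda>i. h (take l (drop (i * l) x))) [0..<k])"

fun iter_comp :: "nat \<Rightarrow> (bool list \<Rightarrow> bool) \<Rightarrow> nat \<Rightarrow> bool list \<Rightarrow> bool" where
  "iter_comp l g 0 = g"
| "iter_comp l g (Suc m) = dcomp l (l ^ (Suc m)) g (iter_comp l g m)"

end

theory Submission
  imports Defs
begin

text \<open>
  Split an input of \<open>g \<diamond> h\<close> into blocks \<open>a\<^sub>1, \<dots>, a\<^sub>k\<close> and let \<open>\<beta>\<close> mark the nonzero blocks.
  If \<open>h\<close> is balanced, summing over the fibres of \<open>h\<close> block by block factorises the Walsh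
  transform: \<open>W\<^sub>g\<^sub>\<diamond>\<^sub>h(a) = W\<^sub>g(\<beta>) \<Prod>\<^bsub>\<beta>\<^sub>i\<^esub> W\<^sub>h(a\<^sub>i)\<close>. As \<open>W\<^sub>g(0) = 0\<close> and \<open>|W\<^sub>h| \<le> 1\<close>, the
  maximal squared Walsh coefficient of \<open>g \<diamond> h\<close> is at most the product of those of \<open>g\<close> and \<open>h\<close>,
  and a maximiser of \<open>g\<close> of weight one makes it equal: put a maximiser of \<open>h\<close> into the single
  block it selects. Likewise a bit in block \<open>i\<close> is pivotal for \<open>g \<diamond> h\<close> iff it is pivotal for
  \<open>h\<close> on that block and the \<open>i\<close>-th input is pivotal for \<open>g\<close>; half of the pivotal points of
  \<open>h\<close> lie in each fibre of \<open>h\<close>, so influences multiply. Iterating, the maximal squared Walsh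
  coefficient of \<open>f\<^sub>m\<close> is the \<open>(m+1)\<close>-st power of that of \<open>g\<close> and \<open>Inf(f\<^sub>m) = Inf(g)\<^sup>m\<^sup>+\<^sup>1\<close>.
\<close>

definition chi :: "bool \<Rightarrow> real" where
  "chi b = (if b then -1 else 1)"

lemma chi_True [simp]: "chi True = -1" and chi_False [simp]: "chi False = 1"
  by (simp_all add: chi_def)

lemma chi_eq_not: "chi (a = (\<not> b)) = chi a * chi b"
  by (auto simp: chi_def)

lemma chi_not [simp]: "chi (\<not> b) = - chi b"
  by (simp add: chi_def)

lemma abs_chi [simp]: "\<bar>chi b\<bar> = 1"
  by (auto simp: chi_def)

lemma finite_cube [simp]: "finite (cube n)"
  and card_cube: "card (cube n) = 2 ^ n"
proof -
  have "cube n = {xs. set xs \<subseteq> UNIV \<and> length xs = n}"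
    by (auto simp: cube_def)
  then show "finite (cube n)" "card (cube n) = 2 ^ n"
    using finite_lists_length_eq[of "UNIV :: bool set" n]
      card_lists_length_eq[of "UNIV :: bool set" n] by simp_all
qed

lemma replicate_in_cube [simp]: "replicate n b \<in> cube n"
  by (simp add: cube_def)

lemma sum_cube_append:
  "(\<Sum>x\<in>cube (m + n). \<phi> x) = (\<Sum>a\<in>cube m. \<Sum>b\<in>cube n. \<phi> (a @ b))"
proof -
  have bij: "bij_betw (\<lambda>(a, b). a @ b) (cube m \<times> cube n) (cube (m + n))"
    by (rule bij_betw_byWitness[where f' = "\<lambda>x. (take m x, drop m x)"]) (auto simp: cube_def)
  show ?thesis
    by (simp add: sum.reindex_bij_betw[OF bij, symmetric] sum.cartesian_product split_def)
qed

lemma sum_cube_Suc: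
  "(\<Sum>x\<in>cube (Suc n). \<phi> x) = (\<Sum>b\<in>cube n. \<phi> (True # b)) + (\<Sum>b\<in>cube n. \<phi> (False # b))"
proof -
  have "cube 1 = {[True], [False]}"
    by (auto simp: cube_def length_Suc_conv)
  then show ?thesis
    using sum_cube_append[where m = 1 and n = n and \<phi> = \<phi>] by simp
qed

lemma sum_split_by_value:
  "finite A \<Longrightarrow> (\<Sum>a\<in>A. \<phi> (h a) a)
    = (\<Sum>a\<in>{a\<in>A. h a = True}. \<phi> True a) + (\<Sum>a\<in>{a\<in>A. h a = False}. \<phi> False a)"
proof -
  assume "finite A"
  then have "(\<Sum>a\<in>A. \<phi> (h a) a)
      = (\<Sum>a\<in>{a\<in>A. h a}. \<phi> (h a) a) + (\<Sum>a\<in>{a\<in>A. \<not> h a}. \<phi> (h a) a)"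
    by (subst sum.union_disjoint[symmetric]) (auto intro: sum.cong)
  also have "\<dots> = (\<Sum>a\<in>{a\<in>A. h a = True}. \<phi> True a) + (\<Sum>a\<in>{a\<in>A. h a = False}. \<phi> False a)"
    by (intro arg_cong2[where f = "(+)"] sum.cong) auto
  finally show ?thesis .
qed

lemma card_eq_sum_of_bool:
  "finite A \<Longrightarrow> real (card {x\<in>A. P x}) = (\<Sum>x\<in>A. of_bool (P x))"
  by (simp add: sum.If_cases Int_def)

lemma card_true_plus_card_false: "card {x\<in>cube n. f x} + card {x\<in>cube n. \<not> f x} = 2 ^ n"
proof -
  have "cube n = {x\<in>cube n. f x} \<union> {x\<in>cube n. \<not> f x}"
    by auto
  then show ?thesis
    by (metis (no_types, lifting) card_Un_disjoint card_cube disjoint_iff finite_Un finite_cube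
        mem_Collect_eq)
qed

lemma card_fibre_balanced:
  assumes "balanced n h"
  shows "real (card {z\<in>cube n. h z = b}) = 2 ^ n / 2"
proof -
  have "2 * card {z\<in>cube n. h z = b} = 2 ^ n"
    using assms card_true_plus_card_false[of n h] by (cases b) (simp_all add: balanced_def)
  then have "real (2 * card {z\<in>cube n. h z = b}) = real (2 ^ n)"
    by (rule arg_cong)
  then show ?thesis
    by simp
qed

lemma ip_Nil [simp]: "ip [] a = False" "ip x [] = False"
  by (simp_all add: ip_def)

lemma ip_Cons [simp]: "ip (b # x) (c # a) = ((b \<and> c) \<noteq> ip x a)"
  by (cases b; cases c) (simp_all add: ip_def)

lemma ip_append: "length a = length c \<Longrightarrow> ip (a @ b) (c @ d) = (ip a c \<noteq> ip b d)"
  by (induction a c rule: list_induct2) auto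

lemma ip_commute: "ip x a = ip a x"
proof (induction x arbitrary: a)
  case (Cons b x)
  then show ?case
    by (cases a) auto
qed simp

lemma ip_replicate_False [simp]: "ip x (replicate m False) = False"
proof (induction x arbitrary: m)
  case (Cons b x)
  then show ?case
    by (cases m) auto
qed simp

lemma chi_ip_eq_prod:
  "length y = length b \<Longrightarrow> chi (ip y b) = (\<Prod>i<length b. if b ! i then chi (y ! i) else 1)"
proof (induction y b rule: list_induct2)
  case (Cons x xs c cs)
  have "chi (ip (x # xs) (c # cs)) = (if c then chi x else 1) * chi (ip xs cs)"
    by (auto simp: chi_def)
  moreover have "(\<Prod>i<Suc (length cs). if (c # cs) ! i then chi ((x # xs) ! i) else 1)
      = (if c then chi x else 1) * (\<Prod>i<length cs. if cs ! i then chi (xs ! i) else 1)"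
    by (subst prod.lessThan_Suc_shift) (simp cong: if_cong)
  ultimately show ?case
    using Cons.IH by simp
qed simp

lemma sum_chi_ip:
  "a \<in> cube n \<Longrightarrow> (\<Sum>x\<in>cube n. chi (ip x a)) = (if a = replicate n False then 2 ^ n else 0)"
proof (induction n arbitrary: a)
  case (Suc n)
  then obtain c a' where "a = c # a'" "a' \<in> cube n"
    by (auto simp: cube_def length_Suc_conv)
  with Suc.IH show ?case
    by (cases c) (auto simp: sum_cube_Suc sum_negf card_cube)
qed (simp add: cube_def)

lemma walsh_eq_sum_chi: "walsh n f a = (\<Sum>x\<in>cube n. chi (f x) * chi (ip x a)) / 2 ^ n"
  unfolding walsh_def by (intro arg_cong[where f = "\<lambda>x. x / _"] sum.cong) (auto simp: chi_def)

lemma walsh_sq_le_1: "(walsh n f a)\<^sup>2 \<le> 1"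
proof -
  have "\<bar>\<Sum>x\<in>cube n. chi (f x) * chi (ip x a)\<bar> \<le> (\<Sum>x\<in>cube n. \<bar>chi (f x) * chi (ip x a)\<bar>)"
    by (rule sum_abs)
  also have "\<dots> = 2 ^ n"
    by (simp add: abs_mult card_cube)
  finally have "\<bar>walsh n f a\<bar> \<le> 1"
    by (simp add: walsh_eq_sum_chi abs_divide)
  then show ?thesis
    by (simp add: abs_square_le_1)
qed

lemma balanced_iff_walsh_zero: "balanced n f \<longleftrightarrow> walsh n f (replicate n False) = 0"
proof -
  have "walsh n f (replicate n False) * 2 ^ n
      = real (card {x\<in>cube n. \<not> f x}) - real (card {x\<in>cube n. f x})"
    using sum_split_by_value[OF finite_cube, where \<phi> = "\<lambda>b x. chi b" and h = f]
    by (simp add: walsh_eq_sum_chi)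
  then have "walsh n f (replicate n False) = 0 \<longleftrightarrow> card {x\<in>cube n. \<not> f x} = card {x\<in>cube n. f x}"
    by auto
  then show ?thesis
    using card_true_plus_card_false[of n f] unfolding balanced_def by linarith
qed

lemma sum_walsh: "(\<Sum>a\<in>cube n. walsh n f a) = chi (f (replicate n False))"
proof -
  have "(\<Sum>a\<in>cube n. walsh n f a) = (\<Sum>a\<in>cube n. \<Sum>x\<in>cube n. chi (f x) * chi (ip x a)) / 2 ^ n"
    by (simp add: walsh_eq_sum_chi sum_divide_distrib[symmetric])
  also have "\<dots> = (\<Sum>x\<in>cube n. chi (f x) * (\<Sum>a\<in>cube n. chi (ip a x))) / 2 ^ n"
    by (subst sum.swap) (simp add: sum_distrib_left ip_commute)
  also have "\<dots> = (\<Sum>x\<in>cube n. if x = replicate n False then chi (f x) * 2 ^ n else 0) / 2 ^ n"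
    by (intro arg_cong[where f = "\<lambda>t. t / _"] sum.cong) (simp_all add: sum_chi_ip)
  also have "\<dots> = chi (f (replicate n False))"
    by (simp add: sum.delta)
  finally show ?thesis .
qed

lemma exists_walsh_nonzero: "\<exists>a\<in>cube n. walsh n f a \<noteq> 0"
  using sum_walsh[of n f] by (metis chi_def one_neq_zero sum.neutral neg_0_equal_iff_equal)

lemma max_walsh_sq_pos:
  assumes "\<forall>v\<in>cube n. (walsh n f v)\<^sup>2 \<le> (walsh n f \<beta>)\<^sup>2"
  shows "(walsh n f \<beta>)\<^sup>2 > 0"
proof -
  obtain a where "a \<in> cube n" "walsh n f a \<noteq> 0"
    using exists_walsh_nonzero by blast
  then show ?thesis
    using assms by (meson less_le_trans zero_less_power2)
qed

lemma min_entropy_eq_max_walsh_sq: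
  assumes "M > 0" and "\<forall>a\<in>cube n. (walsh n f a)\<^sup>2 \<le> M"
    and "a0 \<in> cube n" and "(walsh n f a0)\<^sup>2 = M"
  shows "min_entropy n f = log 2 (1 / M)"
  unfolding min_entropy_def
proof (rule Min_eqI)
  show "finite {log 2 (1 / (walsh n f a)\<^sup>2) |a. a \<in> cube n \<and> (walsh n f a)\<^sup>2 \<noteq> 0}"
    by (rule finite_subset[where B = "(\<lambda>a. log 2 (1 / (walsh n f a)\<^sup>2)) ` cube n"]) auto
next
  fix y assume "y \<in> {log 2 (1 / (walsh n f a)\<^sup>2) |a. a \<in> cube n \<and> (walsh n f a)\<^sup>2 \<noteq> 0}"
  then obtain a where a: "a \<in> cube n" "(walsh n f a)\<^sup>2 \<noteq> 0" "y = log 2 (1 / (walsh n f a)\<^sup>2)"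
    by auto
  then have "1 / M \<le> 1 / (walsh n f a)\<^sup>2"
    using assms(2) by (simp add: frac_le)
  then show "log 2 (1 / M) \<le> y"
    using a assms(1) by simp
qed (use assms in auto)

definition blocks :: "nat \<Rightarrow> nat \<Rightarrow> bool list \<Rightarrow> bool list list" where
  "blocks L k x = map (\<lambda>i. take L (drop (i * L) x)) [0..<k]"

definition nonzero_blocks :: "nat \<Rightarrow> nat \<Rightarrow> bool list \<Rightarrow> bool list" where
  "nonzero_blocks L k x = map (\<lambda>c. c \<noteq> replicate L False) (blocks L k x)"

lemma length_blocks [simp]: "length (blocks L k x) = k"
  by (simp add: blocks_def)

lemma length_nonzero_blocks [simp]: "length (nonzero_blocks L k x) = k"
  by (simp add: nonzero_blocks_def)

lemma dcomp_eq_blocks: "dcomp k L f h x = f (map h (blocks L k x))"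
  by (simp add: dcomp_def blocks_def comp_def)

lemma blocks_append: "length a = L \<Longrightarrow> blocks L (Suc k) (a @ b) = a # blocks L k b"
  by (simp add: blocks_def upt_conv_Cons map_Suc_upt[symmetric] del: upt_Suc)

lemma blocks_concat: "\<forall>z\<in>set zs. length z = L \<Longrightarrow> blocks L (length zs) (concat zs) = zs"
proof (induction zs)
  case Nil
  then show ?case
    by (simp add: blocks_def)
next
  case (Cons a zs)
  then show ?case
    by (simp add: blocks_append)
qed

lemma block_end_le: "i < k \<Longrightarrow> i * L + L \<le> k * (L :: nat)"
  by (metis add.commute mult_Suc mult_le_mono1 Suc_leI)

lemma nth_blocks_in_cube: "x \<in> cube (k * L) \<Longrightarrow> i < k \<Longrightarrow> blocks L k x ! i \<in> cube L"
  using block_end_le[of i k L] by (auto simp: blocks_def cube_def)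

lemma nonzero_blocks_replicate_False:
  "nonzero_blocks L k (replicate (k * L) False) = replicate k False"
proof (rule nth_equalityI)
  fix i assume "i < length (nonzero_blocks L k (replicate (k * L) False))"
  then have "min L (k * L - i * L) = L"
    using block_end_le[of i k L] by simp
  then show "nonzero_blocks L k (replicate (k * L) False) ! i = replicate k False ! i"
    using \<open>i < _\<close> by (simp add: nonzero_blocks_def blocks_def)
qed simp

lemma chi_ip_blocks:
  "x \<in> cube (k * L) \<Longrightarrow> a \<in> cube (k * L) \<Longrightarrow>
    chi (ip x a) = (\<Prod>i<k. chi (ip (blocks L k x ! i) (blocks L k a ! i)))"
proof (induction k arbitrary: x a)
  case (Suc k)
  have split: "x = take L x @ drop L x" "a = take L a @ drop L a"
    by simp_all
  have len: "length (take L x) = L" "length (take L a) = L"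
    "drop L x \<in> cube (k * L)" "drop L a \<in> cube (k * L)"
    using Suc.prems by (auto simp: cube_def)
  have "chi (ip x a) = chi (ip (take L x) (take L a)) * chi (ip (drop L x) (drop L a))"
    using ip_append[of "take L x" "take L a" "drop L x" "drop L a"] len split
    by (simp add: chi_eq_not)
  also have "\<dots> = (\<Prod>i<Suc k. chi (ip (blocks L (Suc k) x ! i) (blocks L (Suc k) a ! i)))"
    using Suc.IH[OF len(3,4)] split blocks_append[OF len(1), of k "drop L x"]
      blocks_append[OF len(2), of k "drop L a"]
    by (simp add: prod.lessThan_Suc_shift del: prod.lessThan_Suc)
  finally show ?case .
qed (simp add: cube_def)

section \<open>Walsh transform of a disjoint composition\<close>

definition fibre_sum :: "(bool list \<Rightarrow> bool) \<Rightarrow> nat \<Rightarrow> (bool list \<Rightarrow> real) \<Rightarrow> bool \<Rightarrow> real" where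
  "fibre_sum h L G b = (\<Sum>z\<in>{z\<in>cube L. h z = b}. G z)"

lemma sum_cube_blocks:
  "(\<Sum>x\<in>cube (k * L). F (map h (blocks L k x)) * (\<Prod>i<k. G i (blocks L k x ! i)))
   = (\<Sum>y\<in>cube k. F y * (\<Prod>i<k. fibre_sum h L (G i) (y ! i)))"
proof (induction k arbitrary: F G)
  case 0
  have "cube 0 = {[]}"
    by (auto simp: cube_def)
  then show ?case
    by (simp add: blocks_def)
next
  case (Suc k)
  let ?P = "\<lambda>y. \<Prod>i<k. fibre_sum h L (G (Suc i)) (y ! i)"
  have "(\<Sum>x\<in>cube (Suc k * L). F (map h (blocks L (Suc k) x)) * (\<Prod>i<Suc k. G i (blocks L (Suc k) x ! i)))
      = (\<Sum>a\<in>cube L. \<Sum>b\<in>cube (k * L). F (map h (blocks L (Suc k) (a @ b)))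
          * (\<Prod>i<Suc k. G i (blocks L (Suc k) (a @ b) ! i)))"
    using sum_cube_append[where m = L and n = "k * L"] by simp
  also have "\<dots> = (\<Sum>a\<in>cube L. G 0 a * (\<Sum>b\<in>cube (k * L).
          F (h a # map h (blocks L k b)) * (\<Prod>i<k. G (Suc i) (blocks L k b ! i))))"
    by (intro sum.cong refl)
      (auto simp: blocks_append cube_def prod.lessThan_Suc_shift sum_distrib_left ac_simps
        simp del: prod.lessThan_Suc)
  also have "\<dots> = (\<Sum>a\<in>cube L. G 0 a * (\<Sum>y\<in>cube k. F (h a # y) * ?P y))"
    using Suc.IH[where F = "\<lambda>y. F (_ # y)" and G = "\<lambda>i. G (Suc i)"] by simp
  also have "\<dots> = (\<Sum>y\<in>cube k. \<Sum>a\<in>cube L. G 0 a * F (h a # y) * ?P y)"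
    by (simp add: sum_distrib_left sum.swap[of _ "cube L"] ac_simps)
  also have "\<dots> = (\<Sum>y\<in>cube k. F (True # y) * (fibre_sum h L (G 0) True * ?P y)
                     + F (False # y) * (fibre_sum h L (G 0) False * ?P y))"
    by (intro sum.cong refl, subst sum_split_by_value[OF finite_cube])
      (simp add: fibre_sum_def sum_distrib_left sum_distrib_right ac_simps)
  also have "\<dots> = (\<Sum>y\<in>cube (Suc k). F y * (\<Prod>i<Suc k. fibre_sum h L (G i) (y ! i)))"
    by (simp add: sum_cube_Suc sum.distrib prod.lessThan_Suc_shift del: prod.lessThan_Suc)
  finally show ?case .
qed

lemma fibre_sum_chi_ip:
  assumes "a \<in> cube L"
  shows "fibre_sum h L (\<lambda>z. chi (ip z a)) b
    = 2 ^ L / 2 * (of_bool (a = replicate L False) + chi b * walsh L h a)"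
proof -
  let ?T = "\<Sum>z\<in>{z\<in>cube L. h z = True}. chi (ip z a)"
  let ?F = "\<Sum>z\<in>{z\<in>cube L. h z = False}. chi (ip z a)"
  have "?T + ?F = (if a = replicate L False then 2 ^ L else 0)"
    using sum_split_by_value[OF finite_cube, where \<phi> = "\<lambda>b z. chi (ip z a)" and h = h]
      sum_chi_ip[OF assms] by simp
  moreover have "walsh L h a * 2 ^ L = ?F - ?T"
    using sum_split_by_value[OF finite_cube, where \<phi> = "\<lambda>b z. chi b * chi (ip z a)" and h = h]
    by (simp add: walsh_eq_sum_chi sum_negf)
  ultimately show ?thesis
    by (cases b) (auto simp: fibre_sum_def field_simps)
qed

lemma walsh_dcomp:
  assumes h_balanced: "balanced L h" and a: "a \<in> cube (k * L)"
  shows "walsh (k * L) (dcomp k L f h) a = walsh k f (nonzero_blocks L k a)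
    * (\<Prod>i<k. if nonzero_blocks L k a ! i then walsh L h (blocks L k a ! i) else 1)"
proof -
  define \<beta> where "\<beta> = nonzero_blocks L k a"
  define P where "P = (\<Prod>i<k. if \<beta> ! i then walsh L h (blocks L k a ! i) else 1)"
  have h0: "walsh L h (replicate L False) = 0"
    using h_balanced by (simp add: balanced_iff_walsh_zero)
  have \<beta>_nth: "\<And>i. i < k \<Longrightarrow> \<beta> ! i \<longleftrightarrow> blocks L k a ! i \<noteq> replicate L False"
    by (simp add: \<beta>_def nonzero_blocks_def)
  have fibres: "(\<Prod>i<k. fibre_sum h L (\<lambda>z. chi (ip z (blocks L k a ! i))) (y ! i))
      = (2 ^ L / 2) ^ k * chi (ip y \<beta>) * P" if "y \<in> cube k" for y
  proof -
    have "(\<Prod>i<k. fibre_sum h L (\<lambda>z. chi (ip z (blocks L k a ! i))) (y ! i))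
        = (\<Prod>i<k. 2 ^ L / 2 * ((if \<beta> ! i then chi (y ! i) else 1)
            * (if \<beta> ! i then walsh L h (blocks L k a ! i) else 1)))"
      by (intro prod.cong refl)
        (auto simp: fibre_sum_chi_ip[OF nth_blocks_in_cube[OF a]] \<beta>_nth h0)
    also have "\<dots> = (2 ^ L / 2) ^ k * ((\<Prod>i<k. if \<beta> ! i then chi (y ! i) else 1) * P)"
      by (simp only: prod.distrib prod_constant card_lessThan P_def)
    also have "\<dots> = (2 ^ L / 2) ^ k * chi (ip y \<beta>) * P"
      using that chi_ip_eq_prod[of y \<beta>] by (simp add: \<beta>_def cube_def)
    finally show ?thesis .
  qed
  have "walsh (k * L) (dcomp k L f h) a * 2 ^ (k * L)
      = (\<Sum>x\<in>cube (k * L). chi (f (map h (blocks L k x)))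
          * (\<Prod>i<k. chi (ip (blocks L k x ! i) (blocks L k a ! i))))"
    by (simp add: walsh_eq_sum_chi dcomp_eq_blocks chi_ip_blocks[OF _ a] cong: sum.cong)
  also have "\<dots> = (\<Sum>y\<in>cube k. chi (f y) * (\<Prod>i<k. fibre_sum h L (\<lambda>z. chi (ip z (blocks L k a ! i))) (y ! i)))"
    by (rule sum_cube_blocks)
  also have "\<dots> = (2 ^ L / 2) ^ k * (\<Sum>y\<in>cube k. chi (f y) * chi (ip y \<beta>)) * P"
    by (simp add: fibres sum_distrib_left sum_distrib_right ac_simps cong: sum.cong)
  also have "\<dots> = (2 ^ L / 2) ^ k * 2 ^ k * walsh k f \<beta> * P"
    by (simp add: walsh_eq_sum_chi)
  also have "(2 ^ L / 2) ^ k * 2 ^ k = (2 :: real) ^ (k * L)"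
    by (simp add: power_divide power_mult[symmetric] mult.commute)
  finally show ?thesis
    by (simp add: \<beta>_def P_def)
qed

lemma balanced_dcomp:
  assumes "balanced k f" "balanced L h"
  shows "balanced (k * L) (dcomp k L f h)"
  using walsh_dcomp[OF assms(2) replicate_in_cube[of "k * L" False], where f = f] assms(1)
  by (simp add: balanced_iff_walsh_zero nonzero_blocks_replicate_False)

lemma walsh_sq_dcomp_le:
  assumes f_balanced: "balanced k f" and h_balanced: "balanced L h"
    and f_max: "\<forall>v\<in>cube k. (walsh k f v)\<^sup>2 \<le> Mf"
    and h_max: "\<forall>a\<in>cube L. (walsh L h a)\<^sup>2 \<le> Mh"
    and a: "a \<in> cube (k * L)"
  shows "(walsh (k * L) (dcomp k L f h) a)\<^sup>2 \<le> Mf * Mh"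
proof -
  define as where "as = blocks L k a"
  define \<beta> where "\<beta> = nonzero_blocks L k a"
  define P where "P = (\<Prod>i<k. if \<beta> ! i then walsh L h (as ! i) else 1)"
  have W: "walsh (k * L) (dcomp k L f h) a = walsh k f \<beta> * P"
    unfolding \<beta>_def as_def P_def by (rule walsh_dcomp[OF h_balanced a])
  have \<beta>_cube: "\<beta> \<in> cube k"
    by (simp add: \<beta>_def cube_def)
  have Mf: "(walsh k f \<beta>)\<^sup>2 \<le> Mf" "0 \<le> Mf"
    using f_max \<beta>_cube by (auto intro: order_trans[OF zero_le_power2])
  show ?thesis
  proof (cases "\<exists>i<k. \<beta> ! i")
    case False
    then have "\<beta> = replicate k False"
      by (intro nth_equalityI) (simp_all add: \<beta>_def)
    then have "walsh k f \<beta> = 0"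
      using f_balanced by (simp add: balanced_iff_walsh_zero)
    moreover have "0 \<le> Mh"
      using h_max replicate_in_cube[of L False] by (meson order_trans zero_le_power2)
    ultimately show ?thesis
      using W Mf by simp
  next
    case True
    then obtain j where j: "j < k" "\<beta> ! j"
      by blast
    define d where "d i = (if \<beta> ! i then walsh L h (as ! i) else 1)\<^sup>2" for i
    have d01: "0 \<le> d i \<and> d i \<le> 1" for i
      by (simp add: d_def walsh_sq_le_1)
    have "P\<^sup>2 = (\<Prod>i<k. d i)"
      by (simp add: P_def d_def prod_power_distrib)
    also have "\<dots> = d j * (\<Prod>i\<in>{..<k} - {j}. d i)"
      using j by (simp add: prod.remove)
    also have "\<dots> \<le> d j"
      using d01 by (simp add: mult_left_le prod_le_1)
    also have "\<dots> \<le> Mh"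
      using j h_max nth_blocks_in_cube[OF a] by (simp add: d_def as_def)
    finally have "P\<^sup>2 \<le> Mh" .
    then show ?thesis
      using W Mf by (simp add: power_mult_distrib mult_mono)
  qed
qed

lemma walsh_dcomp_one_block:
  assumes h_balanced: "balanced L h"
    and \<beta>: "\<beta> \<in> cube k" "j < k" "\<forall>i<k. \<beta> ! i \<longleftrightarrow> i = j"
    and a0: "a0 \<in> cube L" "walsh L h a0 \<noteq> 0"
  shows "\<exists>a\<in>cube (k * L). walsh (k * L) (dcomp k L f h) a = walsh k f \<beta> * walsh L h a0"
proof -
  define zs where "zs = map (\<lambda>i. if i = j then a0 else replicate L False) [0..<k]"
  have zs_len: "\<forall>z\<in>set zs. length z = L"
    using a0 by (auto simp: zs_def cube_def)
  have "map length zs = replicate k L"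
    using a0(1) by (intro nth_equalityI) (simp_all add: zs_def cube_def)
  then have a: "concat zs \<in> cube (k * L)"
    by (simp add: cube_def length_concat sum_list_replicate)
  have blocks: "blocks L k (concat zs) = zs"
    using blocks_concat[OF zs_len] by (simp add: zs_def)
  have "a0 \<noteq> replicate L False"
    using a0 h_balanced by (auto simp: balanced_iff_walsh_zero)
  then have "map (\<lambda>c. c \<noteq> replicate L False) zs = \<beta>"
    using \<beta> by (intro nth_equalityI) (auto simp: zs_def cube_def)
  then have nonzero: "nonzero_blocks L k (concat zs) = \<beta>"
    by (simp add: nonzero_blocks_def blocks)
  have "(\<Prod>i<k. if \<beta> ! i then walsh L h (zs ! i) else 1) = walsh L h a0"
    using \<beta> by (simp add: zs_def prod.delta cong: if_cong)
  then have "walsh (k * L) (dcomp k L f h) (concat zs) = walsh k f \<beta> * walsh L h a0"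
    using walsh_dcomp[OF h_balanced a, of f] unfolding nonzero blocks by simp
  then show ?thesis
    using a by blast
qed

section \<open>Influence of a disjoint composition\<close>

definition var_influence :: "nat \<Rightarrow> (bool list \<Rightarrow> bool) \<Rightarrow> nat \<Rightarrow> real" where
  "var_influence n f i = real (card {x\<in>cube n. f x \<noteq> f (flip x i)}) / 2 ^ n"

lemma influence_eq_sum_var_influence: "influence n f = (\<Sum>i<n. var_influence n f i)"
  by (simp add: influence_def var_influence_def)

lemma length_flip [simp]: "length (flip x i) = length x"
  by (simp add: flip_def)

lemma flip_flip: "r < length z \<Longrightarrow> flip (flip z r) r = z"
  by (simp add: flip_def)

lemma blocks_flip:
  assumes x: "x \<in> cube (k * L)" and i: "i < k" and r: "r < L"
  shows "blocks L k (flip x (i * L + r)) = (blocks L k x)[i := flip (blocks L k x ! i) r]"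
proof (rule nth_equalityI)
  fix i' assume "i' < length (blocks L k (flip x (i * L + r)))"
  then have i': "i' < k"
    by simp
  have len: "length x = k * L"
    using x by (simp add: cube_def)
  consider "i' = i" | "i' < i" | "i < i'"
    by linarith
  then show "blocks L k (flip x (i * L + r)) ! i' = (blocks L k x)[i := flip (blocks L k x ! i) r] ! i'"
  proof cases
    case 1
    have "i * L \<le> length x"
      using block_end_le[OF i, of L] len by linarith
    then have "take L (drop (i * L) x) ! r = x ! (i * L + r)"
      using r by simp
    then show ?thesis
      using 1 i by (simp add: blocks_def flip_def drop_update_swap take_update_swap)
  next
    case 2
    then have "i' * L + L \<le> i * L"
      using block_end_le by blast
    then show ?thesis
      using 2 i i' by (simp add: blocks_def flip_def drop_update_swap)
  next
    case 3
    then have "i * L + r < i' * L"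
      using r block_end_le[OF 3, of L] by simp
    then show ?thesis
      using 3 i i' by (simp add: blocks_def flip_def)
  qed
qed simp

lemma dcomp_flip:
  assumes "x \<in> cube (k * L)" "i < k" "r < L"
  shows "dcomp k L f h (flip x (i * L + r))
    = f ((map h (blocks L k x))[i := h (flip (blocks L k x ! i) r)])"
  using assms by (simp add: dcomp_eq_blocks blocks_flip map_update)

text \<open>Flipping bit \<open>r\<close> swaps the two fibres of \<open>h\<close> among its pivotal points.\<close>

lemma card_pivotal_fibre:
  fixes h :: "bool list \<Rightarrow> bool"
  assumes "r < L"
  shows "real (card {z\<in>cube L. h z = b \<and> h z \<noteq> h (flip z r)})
    = real (card {z\<in>cube L. h z \<noteq> h (flip z r)}) / 2"
proof -
  let ?D = "\<lambda>b. {z\<in>cube L. h z = b \<and> h z \<noteq> h (flip z r)}"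
  have "bij_betw (\<lambda>z. flip z r) (?D True) (?D False)"
    by (rule bij_betw_byWitness[where f' = "\<lambda>z. flip z r"])
      (use assms in \<open>auto simp: cube_def flip_flip\<close>)
  then have "card (?D True) = card (?D False)"
    by (rule bij_betw_same_card)
  moreover have "card {z\<in>cube L. h z \<noteq> h (flip z r)} = card (?D True) + card (?D False)"
    by (subst card_Un_disjoint[symmetric]) (auto intro: arg_cong[where f = card])
  ultimately show ?thesis
    by (cases b) auto
qed

lemma fibre_sum_pivotal:
  assumes "r < L"
  shows "fibre_sum h L (\<lambda>z. of_bool (h z \<noteq> h (flip z r))) b
    = real (card {z\<in>cube L. h z \<noteq> h (flip z r)}) / 2"
proof -
  have "fibre_sum h L (\<lambda>z. of_bool (h z \<noteq> h (flip z r))) b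
      = real (card {z\<in>{z\<in>cube L. h z = b}. h z \<noteq> h (flip z r)})"
    unfolding fibre_sum_def by (rule card_eq_sum_of_bool[symmetric]) simp
  also have "{z\<in>{z\<in>cube L. h z = b}. h z \<noteq> h (flip z r)} = {z\<in>cube L. h z = b \<and> h z \<noteq> h (flip z r)}"
    by auto
  finally show ?thesis
    using card_pivotal_fibre[OF assms, of h b] by simp
qed

lemma fibre_sum_one_balanced: "balanced L h \<Longrightarrow> fibre_sum h L (\<lambda>z. 1) b = 2 ^ L / 2"
  by (simp add: fibre_sum_def card_fibre_balanced)

lemma pivotal_dcomp:
  assumes x: "x \<in> cube (k * L)" and i: "i < k" and r: "r < L"
  defines "z \<equiv> blocks L k x ! i"
  shows "(dcomp k L f h x \<noteq> dcomp k L f h (flip x (i * L + r)))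
    \<longleftrightarrow> (f (map h (blocks L k x)) \<noteq> f (flip (map h (blocks L k x)) i)) \<and> h z \<noteq> h (flip z r)"
proof -
  let ?bs = "map h (blocks L k x)"
  have "dcomp k L f h (flip x (i * L + r)) = f (?bs[i := h (flip z r)])"
    unfolding z_def by (rule dcomp_flip[OF x i r])
  moreover have "dcomp k L f h x = f ?bs"
    by (rule dcomp_eq_blocks)
  moreover have "?bs[i := h z] = ?bs"
    using i by (simp add: z_def list_update_id map_update[symmetric])
  moreover have "flip ?bs i = ?bs[i := \<not> h z]"
    using i by (simp add: z_def flip_def)
  ultimately show ?thesis
    by (cases "h (flip z r)"; cases "h z") auto
qed

lemma var_influence_dcomp:
  assumes h_balanced: "balanced L h" and i: "i < k" and r: "r < L"
  shows "var_influence (k * L) (dcomp k L f h) (i * L + r) = var_influence k f i * var_influence L h r"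
proof -
  define G :: "nat \<Rightarrow> bool list \<Rightarrow> real"
    where "G i' z = (if i' = i then of_bool (h z \<noteq> h (flip z r)) else 1)" for i' z
  define c where "c = real (card {z\<in>cube L. h z \<noteq> h (flip z r)})"
  have pointwise: "of_bool (dcomp k L f h x \<noteq> dcomp k L f h (flip x (i * L + r)))
      = of_bool (f (map h (blocks L k x)) \<noteq> f (flip (map h (blocks L k x)) i))
        * (\<Prod>i'<k. G i' (blocks L k x ! i'))" if x: "x \<in> cube (k * L)" for x
    using i unfolding pivotal_dcomp[OF x i r] by (simp add: G_def prod.delta)
  have fibres: "(\<Prod>i'<k. fibre_sum h L (G i') (y ! i')) = c / 2 * (2 ^ L / 2) ^ (k - 1)" for y
  proof -
    have "fibre_sum h L (G i) (y ! i) = c / 2"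
      using fibre_sum_pivotal[OF r, of h "y ! i"] by (simp add: G_def[abs_def] c_def)
    moreover have "(\<Prod>i'\<in>{..<k} - {i}. fibre_sum h L (G i') (y ! i'))
        = (\<Prod>i'\<in>{..<k} - {i}. 2 ^ L / 2)"
      by (intro prod.cong refl) (simp add: G_def[abs_def] fibre_sum_one_balanced[OF h_balanced])
    ultimately show ?thesis
      using i prod.remove[of "{..<k}" i "\<lambda>i'. fibre_sum h L (G i') (y ! i')"] by simp
  qed
  have "real (card {x\<in>cube (k * L). dcomp k L f h x \<noteq> dcomp k L f h (flip x (i * L + r))})
      = (\<Sum>x\<in>cube (k * L). of_bool (f (map h (blocks L k x)) \<noteq> f (flip (map h (blocks L k x)) i))
          * (\<Prod>i'<k. G i' (blocks L k x ! i')))"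
    by (simp only: card_eq_sum_of_bool[OF finite_cube]) (intro sum.cong refl pointwise)
  also have "\<dots> = (\<Sum>y\<in>cube k. of_bool (f y \<noteq> f (flip y i)) * (\<Prod>i'<k. fibre_sum h L (G i') (y ! i')))"
    by (rule sum_cube_blocks[where F = "\<lambda>y. of_bool (f y \<noteq> f (flip y i))"])
  also have "\<dots> = real (card {y\<in>cube k. f y \<noteq> f (flip y i)}) * (c / 2 * (2 ^ L / 2) ^ (k - 1))"
    by (simp add: fibres card_eq_sum_of_bool sum_distrib_right)
  finally have count: "real (card {x\<in>cube (k * L). dcomp k L f h x \<noteq> dcomp k L f h (flip x (i * L + r))})
      = real (card {y\<in>cube k. f y \<noteq> f (flip y i)}) * (c / 2 * (2 ^ L / 2) ^ (k - 1))" .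
  have scale: "(2 ^ L / 2) ^ (k - 1) = (2 :: real) ^ (k * L) / (2 ^ k * 2 ^ L) * 2"
    using i by (cases k) (simp_all add: power_divide power_add power_mult[symmetric] mult.commute)
  show ?thesis
    unfolding var_influence_def count scale c_def[symmetric] by (simp add: field_simps)
qed

lemma influence_dcomp:
  assumes "balanced L h"
  shows "influence (k * L) (dcomp k L f h) = influence k f * influence L h"
proof -
  have "influence (k * L) (dcomp k L f h)
      = (\<Sum>i<k. \<Sum>r<L. var_influence (k * L) (dcomp k L f h) (i * L + r))"
    unfolding influence_eq_sum_var_influence sum.nat_group[symmetric]
    using sum.shift_bounds_nat_ivl[of "var_influence (k * L) (dcomp k L f h)" 0 "_ * L" L]
    by (simp add: atLeast0LessThan add.commute)
  also have "\<dots> = influence k f * influence L h"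
    by (simp add: var_influence_dcomp[OF assms] influence_eq_sum_var_influence sum_product)
  finally show ?thesis .
qed

section \<open>Iterated composition\<close>

lemma iter_comp_Suc_dcomp: "iter_comp l g (Suc m) = dcomp l (l ^ (m + 1)) g (iter_comp l g m)"
  by simp

lemma balanced_iter_comp:
  "balanced l g \<Longrightarrow> balanced (l ^ (m + 1)) (iter_comp l g m)"
  by (induction m) (simp_all add: balanced_dcomp)

lemma influence_iter_comp:
  assumes "balanced l g"
  shows "influence (l ^ (m + 1)) (iter_comp l g m) = influence l g ^ (m + 1)"
proof (induction m)
  case (Suc m)
  then show ?case
    using influence_dcomp[OF balanced_iter_comp[OF assms, of m], of l g] by simp
qed simp

lemma max_walsh_sq_iter_comp:
  assumes g_balanced: "balanced l g"
    and \<beta>: "\<beta> \<in> cube l" "j < l" "\<forall>i<l. \<beta> ! i \<longleftrightarrow> i = j"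
    and g_max: "\<forall>v\<in>cube l. (walsh l g v)\<^sup>2 \<le> (walsh l g \<beta>)\<^sup>2"
  defines "M \<equiv> (walsh l g \<beta>)\<^sup>2"
  shows "(\<forall>a\<in>cube (l ^ (m + 1)). (walsh (l ^ (m + 1)) (iter_comp l g m) a)\<^sup>2 \<le> M ^ (m + 1))
    \<and> (\<exists>a\<in>cube (l ^ (m + 1)). (walsh (l ^ (m + 1)) (iter_comp l g m) a)\<^sup>2 = M ^ (m + 1))"
proof (induction m)
  case 0
  show ?case
    using g_max \<beta>(1) by (auto simp: M_def)
next
  case (Suc m)
  let ?L = "l ^ (m + 1)" and ?h = "iter_comp l g m"
  have h_balanced: "balanced ?L ?h"
    by (rule balanced_iter_comp[OF g_balanced])
  obtain a0 where a0: "a0 \<in> cube ?L" "(walsh ?L ?h a0)\<^sup>2 = M ^ (m + 1)"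
    using Suc.IH by blast
  have "M > 0"
    unfolding M_def by (rule max_walsh_sq_pos[OF g_max])
  then have "walsh ?L ?h a0 \<noteq> 0"
    using a0(2) by auto
  then obtain a where "a \<in> cube (l * ?L)"
      and "walsh (l * ?L) (dcomp l ?L g ?h) a = walsh l g \<beta> * walsh ?L ?h a0"
    using walsh_dcomp_one_block[OF h_balanced \<beta> a0(1)] by blast
  moreover have "(walsh l g \<beta> * walsh ?L ?h a0)\<^sup>2 = M * M ^ (m + 1)"
    by (simp only: power_mult_distrib a0(2) M_def)
  ultimately have "\<exists>a\<in>cube (l * ?L). (walsh (l * ?L) (dcomp l ?L g ?h) a)\<^sup>2 = M * M ^ (m + 1)"
    by metis
  moreover have "\<forall>a\<in>cube (l * ?L). (walsh (l * ?L) (dcomp l ?L g ?h) a)\<^sup>2 \<le> M * M ^ (m + 1)"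
    using walsh_sq_dcomp_le[OF g_balanced h_balanced g_max[folded M_def]] Suc.IH by blast
  moreover have "l ^ (Suc m + 1) = l * ?L" "M ^ (Suc m + 1) = M * M ^ (m + 1)"
    by simp_all
  ultimately show ?case
    by (simp only: iter_comp_Suc_dcomp)
qed

lemma min_entropy_iter_comp:
  assumes "balanced l g"
    and "\<beta> \<in> cube l" "j < l" "\<forall>i<l. \<beta> ! i \<longleftrightarrow> i = j"
    and "\<forall>v\<in>cube l. (walsh l g v)\<^sup>2 \<le> (walsh l g \<beta>)\<^sup>2"
  shows "min_entropy (l ^ (m + 1)) (iter_comp l g m) = real (m + 1) * min_entropy l g"
proof -
  define M where "M = (walsh l g \<beta>)\<^sup>2"
  have "M > 0"
    unfolding M_def by (rule max_walsh_sq_pos[OF assms(5)])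
  have "min_entropy (l ^ (m + 1)) (iter_comp l g m) = log 2 (1 / M ^ (m + 1))"
    using max_walsh_sq_iter_comp[OF assms, of m] \<open>M > 0\<close>
    by (auto simp: M_def intro: min_entropy_eq_max_walsh_sq)
  also have "\<dots> = log 2 ((1 / M) ^ (m + 1))"
    by (simp only: power_one_over)
  also have "\<dots> = real (m + 1) * log 2 (1 / M)"
    using \<open>M > 0\<close> by (intro log_nat_power) simp
  also have "log 2 (1 / M) = min_entropy l g"
    using min_entropy_eq_max_walsh_sq[OF \<open>M > 0\<close>] assms(2,5) by (simp add: M_def)
  finally show ?thesis .
qed

lemma wt_eq_1E:
  assumes "wt \<beta> = 1"
  obtains j where "j < length \<beta>" "\<forall>i<length \<beta>. \<beta> ! i \<longleftrightarrow> i = j"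
proof -
  have "card {i. i < length \<beta> \<and> \<beta> ! i} = 1"
    using assms by (simp add: wt_def length_filter_conv_card)
  then obtain j where "{i. i < length \<beta> \<and> \<beta> ! i} = {j}"
    by (rule card_1_singletonE)
  then show ?thesis
    using that by blast
qed

theorem theorem5:
  fixes l :: nat and g :: "bool list \<Rightarrow> bool" and \<beta> :: "bool list" and m :: nat
  assumes "balanced l g"
    and "\<beta> \<in> cube l" and "wt \<beta> = 1"
    and "(walsh l g \<beta>)\<^sup>2 = Max ((\<lambda>v. (walsh l g v)\<^sup>2) ` cube l)"
  shows "min_entropy (l ^ (m + 1)) (iter_comp l g m) = real (m + 1) * min_entropy l g
    \<and> min_entropy (l ^ (m + 1)) (iter_comp l g m) / influence (l ^ (m + 1)) (iter_comp l g m)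
      = (min_entropy l g / influence l g) * (real (m + 1) / influence l g ^ m)"
proof -
  obtain j where "j < l" "\<forall>i<l. \<beta> ! i \<longleftrightarrow> i = j"
    using wt_eq_1E[OF assms(3)] assms(2) by (auto simp: cube_def)
  moreover have "\<forall>v\<in>cube l. (walsh l g v)\<^sup>2 \<le> (walsh l g \<beta>)\<^sup>2"
    unfolding assms(4) by (auto intro: Max_ge)
  ultimately have H: "min_entropy (l ^ (m + 1)) (iter_comp l g m) = real (m + 1) * min_entropy l g"
    using min_entropy_iter_comp[OF assms(1,2)] by blast
  moreover have "influence (l ^ (m + 1)) (iter_comp l g m) = influence l g ^ (m + 1)"
    by (rule influence_iter_comp[OF assms(1)])
  ultimately show ?thesis
    by (cases "influence l g = 0") (simp_all add: field_simps)
qed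

end
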